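(* The Open CbNeed reduction $\to_{\mathrm{ond}}$ on programs is deterministic: if $p\to_{\mathrm{ond}} q$ and $p\to_{\mathrm{ond}} q'$ then $q=q'$ (up to $\alpha$-renaming).
   Context: Syntax (split presentation). Terms: $t,u,s ::= x \mid \lambda x.t \mid t\,u$. Values: $v ::= \lambda x.t$ (variables are not values). Environments: $E ::= \epsilon \mid E[x\leftarrow t]$. Programs: $p ::= (t,E)$. In $E[x\leftarrow t]$ and $(u,E[x\leftarrow t])$ the variable $x$ is bound in $E$ and $u$; everything is up to $\alpha$-renaming, appended ES bind fresh variables. Appending: $(t,E)@[x\leftarrow u] := (t,E[x\leftarrow u])$. Inert terms and fireballs: $i ::= x \mid i\,f$, $f ::= v \mid i$. Open term evaluation contexts: $\mathcal{H} ::= \langle\cdot\rangle \mid \mathcal{H}\,t \mid i\,\mathcal{H}$. Term contexts: $C ::= \langle\cdot\rangle \mid C\,t \mid t\,C$. Environment contexts: $G ::= E[x\leftarrow C] \mid G[x\leftarrow u]$. Program contexts: $P ::= (C,E) \mid (t,G)$, with $(C,E)@[x\leftarrow u] := (C,E[x\leftarrow u])$, $(t,G)@[x\leftarrow u] := (t,G[x\leftarrow u])$. Plugging: $(C,E)\langle (t,E')\rangle := (C\langle t\rangle, E'E)$; $(u,E[x\leftarrow C])\langle (t,E')\rangle := (u, E[x\leftarrow C\langle t\rangle]E')$; $(u,G[x\leftarrow s])\langle (t,E)\rangle := ((u,G)\langle(t,E)\rangle)@[x\leftarrow s]$; $P\langle t\rangle := P\langle (t,\epsilon)\rangle$. For $p=(t,E)$,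 $p@[x\leftarrow\mathcal{H}]$ denotes the program context $(t,E[x\leftarrow\mathcal{H}])$. Look-up $P(x)$: $P(x)=t$ if the list of ES of $P$ contains $[x\leftarrow t]$ with $t$ a term, and $P(x)=\bot$ otherwise. $v^{\alpha}$ denotes a copy of $v$ with bound variables renamed to fresh ones. Needed variables: $nv(x)=\{x\}$, $nv(\lambda x.t)=\emptyset$, $nv(t\,u)=nv(t)\cup nv(u)$; $nv((t,\epsilon))=nv(t)$, $nv((t,E[x\leftarrow u]))=nv((t,E))$ if $x\notin nv((t,E))$, else $(nv((t,E))\setminus\{x\})\cup nv(u)$; $nv(\langle\cdot\rangle)=\emptyset$, $nv(\mathcal{H}\,t)=nv(\mathcal{H})$, $nv(i\,\mathcal{H})=nv(i)\cup nv(\mathcal{H})$. Open evaluation contexts $P\in\mathcal{E}_{{\mathcal{V}}}$, inductively: $(\mathcal{H},\epsilon)\in\mathcal{E}_{nv(\mathcal{H})}$; if $P\in\mathcal{E}_{{\mathcal{V}}}$, $x\in{\mathcal{V}}$, $i$ inert then $P@[x\leftarrow i]\in\mathcal{E}_{({\mathcal{V}}\setminus\{x\})\cup nv(i)}$; if $P\in\mathcal{E}_{{\mathcal{V}}}$, $x\notin{\mathcal{V}}$ then $P@[x\leftarrow t]\in\mathcal{E}_{{\mathcal{V}}}$; if $P\in\mathcal{E}_{{\mathcal{V}}}$, $x\notin{\mathcal{V}}$ then $P\langle x\rangle@[x\leftarrow\mathcal{H}]\in\mathcal{E}_{{\mathcal{V}}\cup nv(\mathcal{H})}$ ($x$ not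 in the domain of $P$). Open CbNeed rules, for $P\in\mathcal{E}_{{\mathcal{V}}}$ for some ${\mathcal{V}}$: $P\langle(\lambda x.t)u\rangle \to_{\mathrm{om}} P\langle (t,[x\leftarrow u])\rangle$; $P\langle x\rangle\to_{\mathrm{oe}} P\langle v^{\alpha}\rangle$ if $P(x)=v$. $\to_{\mathrm{ond}} := \to_{\mathrm{om}}\cup\to_{\mathrm{oe}}$. *)

theory Defs
  imports Main
begin

type_synonym var = nat

datatype trm = Var var | Lam var trm | App trm trm

text \<open>Environments: E[x<-t] is represented as E @ [(x,t)], i.e. the LAST element
  of the list is the outermost explicit substitution.  Programs are pairs (t,E).\<close>
type_synonym env = "(var \<times> trm) list"
type_synonym prog = "trm \<times> env"

fun is_value :: "trm \<Rightarrow> bool" where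
  "is_value (Lam x t) = True"
| "is_value _ = False"

fun inert :: "trm \<Rightarrow> bool" where
  "inert (Var x) = True"
| "inert (App i f) = (inert i \<and> (is_value f \<or> inert f))"
| "inert (Lam x t) = False"

fun fv :: "trm \<Rightarrow> var set" where
  "fv (Var x) = {x}"
| "fv (Lam x t) = fv t - {x}"
| "fv (App t u) = fv t \<union> fv u"

fun bvars :: "trm \<Rightarrow> var list" where
  "bvars (Var x) = []"
| "bvars (Lam x t) = x # bvars t"
| "bvars (App t u) = bvars t @ bvars u"

fun names :: "trm \<Rightarrow> var set" where
  "names (Var x) = {x}"
| "names (Lam x t) = insert x (names t)"
| "names (App t u) = names t \<union> names u"

text \<open>free variables of a program, computed on the reversed environment (outermost first)\<close>
fun fvR :: "trm \<Rightarrow> env \<Rightarrow> var set" where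
  "fvR t [] = fv t"
| "fvR t ((x,s) # R) = (fvR t R - {x}) \<union> fv s"

definition fvp :: "prog \<Rightarrow> var set" where
  "fvp p = fvR (fst p) (rev (snd p))"

definition pbinders :: "prog \<Rightarrow> var list" where
  "pbinders p = bvars (fst p) @ concat (map (\<lambda>(x,s). x # bvars s) (snd p))"

definition pnames :: "prog \<Rightarrow> var set" where
  "pnames p = names (fst p) \<union> (\<Union>(x,s)\<in>set (snd p). insert x (names s))"

definition well_named :: "prog \<Rightarrow> bool" where
  "well_named p = (distinct (pbinders p) \<and> set (pbinders p) \<inter> fvp p = {})"

fun alv :: "(var \<times> var) list \<Rightarrow> var \<Rightarrow> var \<Rightarrow> bool" where
  "alv [] x y = (x = y)"
| "alv ((a,b) # G) x y = (if x = a \<or> y = b then x = a \<and> y = b else alv G x y)"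

fun alphaT :: "(var \<times> var) list \<Rightarrow> trm \<Rightarrow> trm \<Rightarrow> bool" where
  "alphaT G (Var x) (Var y) = alv G x y"
| "alphaT G (Lam x t) (Lam y u) = alphaT ((x,y) # G) t u"
| "alphaT G (App t1 t2) (App u1 u2) = (alphaT G t1 u1 \<and> alphaT G t2 u2)"
| "alphaT G _ _ = False"

text \<open>In (u, E[x<-s]) the variable x is bound in E and u (not in s).  The function
  works on reversed environments (outermost ES first).\<close>
fun alphaR :: "(var \<times> var) list \<Rightarrow> trm \<Rightarrow> trm \<Rightarrow> env \<Rightarrow> env \<Rightarrow> bool" where
  "alphaR G t u [] [] = alphaT G t u"
| "alphaR G t u ((x,s) # R) ((y,s') # R') = (alphaT G s s' \<and> alphaR ((x,y) # G) t u R R')"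
| "alphaR G t u _ _ = False"

definition alpha_trm :: "trm \<Rightarrow> trm \<Rightarrow> bool" where
  "alpha_trm t u = alphaT [] t u"

definition alpha_prog :: "prog \<Rightarrow> prog \<Rightarrow> bool" where
  "alpha_prog p q = alphaR [] (fst p) (fst q) (rev (snd p)) (rev (snd q))"

datatype ctx = Hole | CAppL ctx trm | CAppR trm ctx

fun plugc :: "ctx \<Rightarrow> trm \<Rightarrow> trm" where
  "plugc Hole t = t"
| "plugc (CAppL C u) t = App (plugc C t) u"
| "plugc (CAppR u C) t = App u (plugc C t)"

fun is_H :: "ctx \<Rightarrow> bool" where
  "is_H Hole = True"
| "is_H (CAppL H t) = is_H H"
| "is_H (CAppR i H) = (inert i \<and> is_H H)"

fun nv :: "trm \<Rightarrow> var set" where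
  "nv (Var x) = {x}"
| "nv (Lam x t) = {}"
| "nv (App t u) = nv t \<union> nv u"

fun nvC :: "ctx \<Rightarrow> var set" where
  "nvC Hole = {}"
| "nvC (CAppL H t) = nvC H"
| "nvC (CAppR i H) = nv i \<union> nvC H"

text \<open>Program contexts: PCt C E is (C,E);  PCe u E1 x C E2 is (u, E1[x<-C]E2),
  i.e. the environment context G = E1[x<-C] followed by the ES of E2.\<close>
datatype pctx = PCt ctx env | PCe trm env var ctx env

fun pplug :: "pctx \<Rightarrow> prog \<Rightarrow> prog" where
  "pplug (PCt C E) (t, E') = (plugc C t, E' @ E)"
| "pplug (PCe u E1 x C E2) (t, E') = (u, E1 @ [(x, plugc C t)] @ E' @ E2)"

definition pplugt :: "pctx \<Rightarrow> trm \<Rightarrow> prog" where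
  "pplugt P t = pplug P (t, [])"

fun papp :: "pctx \<Rightarrow> var \<Rightarrow> trm \<Rightarrow> pctx" where
  "papp (PCt C E) x u = PCt C (E @ [(x,u)])"
| "papp (PCe t E1 y C E2) x u = PCe t E1 y C (E2 @ [(x,u)])"

text \<open>p@[x<-H] for a program p = (t,E) is the program context (t, E[x<-H]).\<close>
fun papp_ctx :: "prog \<Rightarrow> var \<Rightarrow> ctx \<Rightarrow> pctx" where
  "papp_ctx (t, E) x H = PCe t E x H []"

fun pdom :: "pctx \<Rightarrow> var set" where
  "pdom (PCt C E) = fst ` set E"
| "pdom (PCe u E1 y C E2) = fst ` set E1 \<union> {y} \<union> fst ` set E2"

text \<open>Look-up P(x): the term t such that [x<-t] is among the ES of P (None = bottom).\<close>
fun plookup :: "pctx \<Rightarrow> var \<Rightarrow> trm option" where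
  "plookup (PCt C E) x = map_of E x"
| "plookup (PCe u E1 y C E2) x = map_of (E1 @ E2) x"

inductive evctx :: "pctx \<Rightarrow> var set \<Rightarrow> bool" where
  ev_base: "is_H H \<Longrightarrow> evctx (PCt H []) (nvC H)"
| ev_inert: "\<lbrakk>evctx P V; x \<in> V; inert i; x \<notin> pdom P\<rbrakk>
      \<Longrightarrow> evctx (papp P x i) ((V - {x}) \<union> nv i)"
| ev_skip: "\<lbrakk>evctx P V; x \<notin> V; x \<notin> pdom P\<rbrakk> \<Longrightarrow> evctx (papp P x t) V"
| ev_hered: "\<lbrakk>evctx P V; x \<notin> V; is_H H; x \<notin> pdom P\<rbrakk>
      \<Longrightarrow> evctx (papp_ctx (pplugt P (Var x)) x H) (V \<union> nvC H)"

inductive ond_raw :: "prog \<Rightarrow> prog \<Rightarrow> bool" where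
  om: "\<lbrakk>evctx P V; well_named (pplugt P (App (Lam x t) u))\<rbrakk>
      \<Longrightarrow> ond_raw (pplugt P (App (Lam x t) u)) (pplug P (t, [(x, u)]))"
| oe: "\<lbrakk>evctx P V; well_named (pplugt P (Var x)); plookup P x = Some v; is_value v;
        alpha_trm v v'; set (bvars v') \<inter> pnames (pplugt P (Var x)) = {}\<rbrakk>
      \<Longrightarrow> ond_raw (pplugt P (Var x)) (pplugt P v')"

definition ond :: "prog \<Rightarrow> prog \<Rightarrow> bool" where
  "ond p q = (\<exists>p0 q0. alpha_prog p p0 \<and> ond_raw p0 q0 \<and> alpha_prog q0 q)"

end

(* Raw steps act on well-named representatives, and on such a program the decomposition P<r> into an
   open evaluation context and a redex (a beta-redex, or a variable bound in P to a value) is unique: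
   by induction on the two evaluation contexts, two different decompositions force one redex to be a
   variable that the other context needs, whereas needed variables are never bound by the context.
   Hence raw steps are deterministic up to the renaming of the copied value. To pass to programs up to
   alpha, two well-named alpha-equivalent programs are related by a bijective renaming fixing their
   free variables; raw steps commute with such renamings, and since steps create no free variables,
   renaming the reduct only changes it up to alpha. *)

theory Submission
  imports Defs "HOL-Combinatorics.Transposition"
begin

section \<open>Alpha-equivalence is a congruence\<close>

lemma alv_Cons_iff [simp]:
  "alv ((a, b) # G) x y \<longleftrightarrow> x = a \<and> y = b \<or> x \<noteq> a \<and> y \<noteq> b \<and> alv G x y"
  by simp

declare alv.simps(2) [simp del]

lemma alv_swap: "alv G x y \<Longrightarrow> alv (map prod.swap G) y x"
  by (induction G) auto

lemma alphaT_swap: "alphaT G t u \<Longrightarrow> alphaT (map prod.swap G) u t"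
  by (induction G t u rule: alphaT.induct) (auto intro: alv_swap)

lemma alphaR_swap: "alphaR G t u R R' \<Longrightarrow> alphaR (map prod.swap G) u t R' R"
  by (induction G t u R R' rule: alphaR.induct) (auto intro: alphaT_swap)

lemma alv_trans:
  "map snd G1 = map fst G2 \<Longrightarrow> alv G1 x y \<Longrightarrow> alv G2 y z \<Longrightarrow> alv (zip (map fst G1) (map snd G2)) x z"
proof (induction G1 arbitrary: G2)
  case (Cons p G1)
  then obtain a b c G2' where "p = (a, b)" "G2 = (b, c) # G2'" "map snd G1 = map fst G2'"
    by (cases p; cases G2) auto
  with Cons show ?case by auto
qed simp

lemma alphaT_trans:
  "alphaT G1 t u \<Longrightarrow> alphaT G2 u w \<Longrightarrow> map snd G1 = map fst G2
    \<Longrightarrow> alphaT (zip (map fst G1) (map snd G2)) t w"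
proof (induction G1 t u arbitrary: G2 w rule: alphaT.induct)
  case (1 G x y)
  then show ?case by (cases w) (auto intro: alv_trans)
next
  case (2 G x t y u)
  then obtain z w' where "w = Lam z w'" "alphaT ((y, z) # G2) u w'"
    by (cases w) auto
  with "2.IH"[of "(y, z) # G2" w'] "2.prems" show ?case by simp
next
  case (3 G t1 t2 u1 u2)
  then show ?case by (cases w) auto
qed auto

lemma alphaR_trans:
  "alphaR G1 t u R1 R2 \<Longrightarrow> alphaR G2 u w R2 R3 \<Longrightarrow> map snd G1 = map fst G2
    \<Longrightarrow> alphaR (zip (map fst G1) (map snd G2)) t w R1 R3"
proof (induction G1 t u R1 R2 arbitrary: G2 R3 rule: alphaR.induct)
  case (1 G t u)
  then show ?case by (cases R3) (auto intro: alphaT_trans)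
next
  case (2 G t u x s R y s' R')
  then obtain z s'' R3' where "R3 = (z, s'') # R3'" "alphaT G2 s' s''" "alphaR ((y, z) # G2) u w R' R3'"
    by (cases R3) auto
  with "2.IH"[of "(y, z) # G2" R3'] "2.prems" show ?case by (auto intro: alphaT_trans)
qed auto

lemma alpha_trm_sym: "alpha_trm t u \<Longrightarrow> alpha_trm u t"
  unfolding alpha_trm_def using alphaT_swap[of "[]"] by simp

lemma alpha_trm_trans: "alpha_trm t u \<Longrightarrow> alpha_trm u w \<Longrightarrow> alpha_trm t w"
  unfolding alpha_trm_def using alphaT_trans[of "[]" _ _ "[]"] by simp

lemma alpha_prog_sym: "alpha_prog p q \<Longrightarrow> alpha_prog q p"
  unfolding alpha_prog_def using alphaR_swap[of "[]"] by simp

lemma alpha_prog_trans: "alpha_prog p q \<Longrightarrow> alpha_prog q r \<Longrightarrow> alpha_prog p r"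
  unfolding alpha_prog_def using alphaR_trans[of "[]" _ _ _ _ "[]"] by simp

lemma alv_Id: "set G \<subseteq> Id \<Longrightarrow> alv G x y \<longleftrightarrow> x = y"
  by (induction G) auto

lemma alv_append_Id: "set G' \<subseteq> Id \<Longrightarrow> alv (G @ G') x y \<longleftrightarrow> alv G x y"
  by (induction G) (auto simp: alv_Id)

lemma alphaT_append_Id: "alphaT G t u \<Longrightarrow> set G' \<subseteq> Id \<Longrightarrow> alphaT (G @ G') t u"
  by (induction G t u rule: alphaT.induct) (auto simp: alv_append_Id)

lemma alpha_trm_imp_alphaT_Id: "alpha_trm t u \<Longrightarrow> set G \<subseteq> Id \<Longrightarrow> alphaT G t u"
  unfolding alpha_trm_def using alphaT_append_Id[of "[]"] by simp

lemma alphaT_Id_refl: "set G \<subseteq> Id \<Longrightarrow> alphaT G t t"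
  by (induction t arbitrary: G) (auto simp: alv_Id)

lemma alpha_trm_refl: "alpha_trm t t"
  unfolding alpha_trm_def by (simp add: alphaT_Id_refl)

lemma alpha_trm_plugc: "alpha_trm t u \<Longrightarrow> alpha_trm (plugc C t) (plugc C u)"
  by (induction C) (use alpha_trm_refl in \<open>auto simp: alpha_trm_def\<close>)

abbreviation alpha_env_pointwise :: "env \<Rightarrow> env \<Rightarrow> bool" where
  "alpha_env_pointwise \<equiv> list_all2 (\<lambda>(x, s) (y, s'). x = y \<and> alpha_trm s s')"

lemma alphaR_Id_pointwise:
  "alpha_env_pointwise R R' \<Longrightarrow> alpha_trm t t' \<Longrightarrow> set G \<subseteq> Id
    \<Longrightarrow> alphaR G t t' R R'"
proof (induction R arbitrary: R' G)
  case (Cons p R)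
  then show ?case
    by (cases p; cases R') (auto simp: list_all2_Cons1 alpha_trm_imp_alphaT_Id)
qed (auto simp: alpha_trm_imp_alphaT_Id)

lemma alpha_prog_pointwise:
  "alpha_env_pointwise E E' \<Longrightarrow> alpha_trm t t' \<Longrightarrow> alpha_prog (t, E) (t', E')"
  unfolding alpha_prog_def by (simp add: alphaR_Id_pointwise list_all2_rev)

lemma alpha_env_pointwise_refl: "alpha_env_pointwise E E"
  by (simp add: list_all2_refl case_prod_beta alpha_trm_refl)

lemma alpha_prog_refl: "alpha_prog p p"
  using alpha_prog_pointwise[OF alpha_env_pointwise_refl alpha_trm_refl] by (cases p) simp

lemma alpha_prog_pplugt: "alpha_trm t u \<Longrightarrow> alpha_prog (pplugt P t) (pplugt P u)"
  by (cases P)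
    (auto simp: pplugt_def alpha_trm_plugc alpha_trm_refl alpha_env_pointwise_refl
      intro!: alpha_prog_pointwise list_all2_appendI)

section \<open>Unique decomposition\<close>

fun append_es :: "prog \<Rightarrow> var \<Rightarrow> trm \<Rightarrow> prog" where
  "append_es (t, E) x s = (t, E @ [(x, s)])"

lemma append_es_eq_iff: "append_es p x s = append_es p' x' s' \<longleftrightarrow> p = p' \<and> x = x' \<and> s = s'"
  by (cases p; cases p') auto

lemma append_es_neq_Nil: "append_es p x s \<noteq> (t, [])"
  by (cases p) auto

lemma pplugt_PCt_Nil: "pplugt (PCt H []) r = (plugc H r, [])"
  by (simp add: pplugt_def)

lemma pplugt_papp: "pplugt (papp P x s) r = append_es (pplugt P r) x s"
  by (cases P) (auto simp: pplugt_def)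

lemma pplugt_papp_ctx: "pplugt (papp_ctx p x H) r = append_es p x (plugc H r)"
  by (cases p) (auto simp: pplugt_def)

lemma pdom_eq_pplugt: "pdom P = fst ` set (snd (pplugt P r))"
  by (cases P) (auto simp: pplugt_def)

lemma pdom_papp: "pdom (papp P x s) = insert x (pdom P)"
  by (cases P) auto

lemma pdom_papp_ctx: "pdom (papp_ctx p x H) = insert x (fst ` set (snd p))"
  by (cases p) auto

lemma plookup_in_pdom: "plookup P y = Some v \<Longrightarrow> y \<in> pdom P"
  by (cases P) (auto dest: map_of_SomeD intro: rev_image_eqI)

lemma plookup_papp: "plookup P y = Some v \<Longrightarrow> plookup (papp P x s) y = Some v"
  by (cases P) (auto simp: map_add_def split: option.splits)

lemma plookup_papp_new: "x \<notin> pdom P \<Longrightarrow> plookup (papp P x s) x = Some s"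
  by (cases P) (auto simp: map_add_def map_of_eq_None_iff[THEN iffD2] split: option.splits)

definition redex_or_var :: "trm \<Rightarrow> bool" where
  "redex_or_var r \<longleftrightarrow> (\<exists>x t u. r = App (Lam x t) u) \<or> (\<exists>y. r = Var y)"

lemma plugc_eq_Lam: "plugc C r = Lam x t \<Longrightarrow> C = Hole \<and> r = Lam x t"
  by (cases C) auto

lemma plugc_redex_or_var_not_value: "redex_or_var r \<Longrightarrow> \<not> is_value (plugc C r)"
  by (cases C) (auto simp: redex_or_var_def)

lemma inert_not_value: "inert s \<Longrightarrow> \<not> is_value s"
  by (cases s) auto

lemma inert_plugc_redex_or_var:
  "redex_or_var r \<Longrightarrow> inert (plugc C r) \<Longrightarrow> \<exists>y. r = Var y \<and> y \<in> nv (plugc C r)"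
proof (induction C)
  case (CAppR t C)
  then show ?case using plugc_redex_or_var_not_value by auto
qed (auto simp: redex_or_var_def)

lemma nv_subset_fv: "nv t \<subseteq> fv t"
  by (induction t) auto

lemma nvC_subset_fv: "nvC C \<subseteq> fv (plugc C r)"
  by (induction C) (use nv_subset_fv in auto)

lemma is_H_decomp_unique:
  assumes "is_H H" "is_H H'" "plugc H r = plugc H' r'" "redex_or_var r" "redex_or_var r'"
  shows "H = H' \<and> r = r' \<or> (\<exists>y. r = Var y \<and> y \<in> nvC H') \<or> (\<exists>y. r' = Var y \<and> y \<in> nvC H)"
  using assms
proof (induction H arbitrary: H')
  case Hole
  then show ?case
    by (cases H') (auto simp: redex_or_var_def dest!: plugc_eq_Lam)
next
  case (CAppL H w)
  show ?case
  proof (cases H')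
    case Hole
    then show ?thesis using CAppL.prems by (auto simp: redex_or_var_def dest!: plugc_eq_Lam)
  next
    case (CAppL H2 w')
    then show ?thesis using CAppL.IH[of H2] CAppL.prems by auto
  next
    case (CAppR i H2)
    then show ?thesis using CAppL.prems inert_plugc_redex_or_var[of r H] by auto
  qed
next
  case (CAppR i H)
  show ?case
  proof (cases H')
    case Hole
    then show ?thesis using CAppR.prems by (auto simp: redex_or_var_def)
  next
    case (CAppL H2 w)
    then show ?thesis using CAppR.prems inert_plugc_redex_or_var[of r' H2] by auto
  next
    case (CAppR i' H2)
    then show ?thesis using CAppR.IH[of H2] CAppR.prems by auto
  qed
qed

text \<open>The paper's \<open>nv((t, E[x\<leftarrow>s]))\<close>, computed from \<open>V = nv((t, E))\<close>.\<close>

definition nv_append :: "var set \<Rightarrow> var \<Rightarrow> trm \<Rightarrow> var set" where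
  "nv_append V x s = (if x \<in> V then (V - {x}) \<union> nv s else V)"

text \<open>The rules \<open>ev_inert\<close> and \<open>ev_skip\<close> merged into one, which halves the case analysis below.\<close>

inductive evctx_alt :: "pctx \<Rightarrow> var set \<Rightarrow> bool" where
  base: "is_H H \<Longrightarrow> evctx_alt (PCt H []) (nvC H)"
| append: "\<lbrakk>evctx_alt P V; x \<notin> pdom P; x \<in> V \<longrightarrow> inert s\<rbrakk> \<Longrightarrow> evctx_alt (papp P x s) (nv_append V x s)"
| hered: "\<lbrakk>evctx_alt P V; x \<notin> V; is_H H; x \<notin> pdom P\<rbrakk>
      \<Longrightarrow> evctx_alt (papp_ctx (pplugt P (Var x)) x H) (V \<union> nvC H)"

lemma evctx_imp_evctx_alt: "evctx P V \<Longrightarrow> evctx_alt P V"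
proof (induction rule: evctx.induct)
  case (ev_inert P V x i)
  then show ?case using evctx_alt.append[of P V x i] by (simp add: nv_append_def)
next
  case (ev_skip P V x t)
  then show ?case using evctx_alt.append[of P V x t] by (simp add: nv_append_def)
qed (auto intro: evctx_alt.intros)

text \<open>How a decomposition \<open>P\<langle>r\<rangle>\<close> can differ from another one: \<open>r\<close> is a variable that the
  other context needs, or that \<open>P\<close> binds to a non-value.\<close>

definition stuck_var :: "pctx \<Rightarrow> var set \<Rightarrow> trm \<Rightarrow> bool" where
  "stuck_var P V r \<longleftrightarrow> (\<exists>y. r = Var y \<and> (y \<in> V \<or> (\<exists>s. plookup P y = Some s \<and> \<not> is_value s)))"

lemma stuck_var_papp:
  assumes "stuck_var P V r" "x \<notin> pdom P" "x \<in> V \<longrightarrow> inert s"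
  shows "stuck_var (papp P x s) (nv_append V x s) r"
  using assms plookup_papp[of P] plookup_papp_new[of x P s] inert_not_value[of s]
  unfolding stuck_var_def nv_append_def by (cases "r = Var x") auto

lemma stuck_var_papp_Un: "stuck_var P V r \<Longrightarrow> stuck_var (papp P x s) (V \<union> W) r"
  using plookup_papp[of P] unfolding stuck_var_def by blast

lemma decomp_unique_append_hered:
  assumes "x \<notin> pdom P" "x \<in> V \<longrightarrow> inert (plugc H r')" "x \<notin> V'" "x \<notin> pdom P'" "redex_or_var r'"
    and "P = P' \<and> r = Var x \<and> V = V' \<or> stuck_var P V' r \<or> stuck_var P' V (Var x)"
  shows "stuck_var (papp P x (plugc H r')) (V' \<union> nvC H) r
    \<or> stuck_var (papp_ctx (pplugt P' (Var x)) x H) (nv_append V x (plugc H r')) r'"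
  using assms(6)
proof (elim disjE)
  assume "P = P' \<and> r = Var x \<and> V = V'"
  then show ?thesis
    using plookup_papp_new[OF assms(1)] plugc_redex_or_var_not_value[OF assms(5)]
    unfolding stuck_var_def by blast
next
  assume "stuck_var P V' r"
  then show ?thesis using stuck_var_papp_Un by blast
next
  assume "stuck_var P' V (Var x)"
  then have "x \<in> V"
    using plookup_in_pdom assms(4) unfolding stuck_var_def by auto
  then show ?thesis
    using assms(2) inert_plugc_redex_or_var[OF assms(5)] unfolding stuck_var_def nv_append_def by auto
qed

lemma decomp_unique_hered_hered:
  assumes "x \<notin> V" "x \<notin> pdom P" "x \<notin> V'" "x \<notin> pdom P'" "is_H H" "is_H H'"
    and "plugc H r = plugc H' r'" "redex_or_var r" "redex_or_var r'"
    and "P = P' \<and> V = V' \<or> stuck_var P V' (Var x) \<or> stuck_var P' V (Var x)"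
  shows "P = P' \<and> H = H' \<and> r = r' \<and> V = V'
    \<or> stuck_var (papp_ctx (pplugt P (Var x)) x H) (V' \<union> nvC H') r
    \<or> stuck_var (papp_ctx (pplugt P' (Var x)) x H') (V \<union> nvC H) r'"
proof -
  have "\<not> stuck_var P V' (Var x)" "\<not> stuck_var P' V (Var x)"
    using assms(1-4) plookup_in_pdom unfolding stuck_var_def by blast+
  with assms(10) have "P = P' \<and> V = V'"
    by blast
  with is_H_decomp_unique[OF assms(5-9)] show ?thesis
    unfolding stuck_var_def by auto
qed

lemma evctx_alt_decomp_unique:
  "evctx_alt P V \<Longrightarrow> evctx_alt P' V' \<Longrightarrow> pplugt P r = pplugt P' r' \<Longrightarrow> redex_or_var r
    \<Longrightarrow> redex_or_var r' \<Longrightarrow> P = P' \<and> r = r' \<and> V = V' \<or> stuck_var P V' r \<or> stuck_var P' V r'"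
proof (induction arbitrary: P' V' r r' rule: evctx_alt.induct)
  case (base H)
  from base.prems(1) show ?case
  proof cases
    case (base H')
    then show ?thesis
      using is_H_decomp_unique[of H H' r r'] base.hyps base.prems
      by (auto simp: pplugt_PCt_Nil stuck_var_def)
  qed (use base.prems in \<open>auto simp: pplugt_PCt_Nil pplugt_papp pplugt_papp_ctx
      append_es_neq_Nil[symmetric]\<close>)
next
  case (append P V x s)
  from append.prems(1) show ?case
  proof cases
    case (append P0' V0' x' s')
    with append.prems have "pplugt P r = pplugt P0' r'" "x' = x" "s' = s"
      by (simp_all add: pplugt_papp append_es_eq_iff)
    with append.IH[OF \<open>evctx_alt P0' V0'\<close>] append.hyps append.prems append show ?thesis
      by (auto intro: stuck_var_papp)
  next
    case (hered P0' V0' x' H')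
    with append.prems have "pplugt P r = pplugt P0' (Var x)" "x' = x" "s = plugc H' r'"
      by (auto simp: pplugt_papp pplugt_papp_ctx append_es_eq_iff)
    with append.IH[OF \<open>evctx_alt P0' V0'\<close>] append.hyps append.prems hered show ?thesis
      using decomp_unique_append_hered[of x P V H' r' V0' P0' r]
      by (simp add: redex_or_var_def)
  qed (use append.prems in \<open>auto simp: pplugt_PCt_Nil pplugt_papp append_es_neq_Nil\<close>)
next
  case (hered P V x H)
  from hered.prems(1) show ?case
  proof cases
    case (append P0' V0' x' s')
    with hered.prems have eq: "pplugt P (Var x) = pplugt P0' r'" "x' = x" "s' = plugc H r"
      by (auto simp: pplugt_papp pplugt_papp_ctx append_es_eq_iff)
    with hered.IH[OF \<open>evctx_alt P0' V0'\<close>, of "Var x" r'] hered.prems(4)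
    have "P0' = P \<and> r' = Var x \<and> V0' = V \<or> stuck_var P0' V r' \<or> stuck_var P V0' (Var x)"
      by (auto simp: redex_or_var_def)
    with decomp_unique_append_hered[of x P0' V0' H r V P r'] hered.hyps hered.prems append eq
    show ?thesis by auto
  next
    case (hered P0' V0' x' H')
    with hered.prems have eq: "pplugt P (Var x) = pplugt P0' (Var x)" "x' = x" "plugc H r = plugc H' r'"
      by (auto simp: pplugt_papp_ctx append_es_eq_iff)
    with hered.IH[OF \<open>evctx_alt P0' V0'\<close>, of "Var x" "Var x"]
    have "P = P0' \<and> V = V0' \<or> stuck_var P V0' (Var x) \<or> stuck_var P0' V (Var x)"
      by (simp add: redex_or_var_def)
    with decomp_unique_hered_hered[of x V P V0' P0' H H' r r'] hered.hyps hered.prems hered eq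
    show ?thesis by auto
  qed (use hered.prems in \<open>auto simp: pplugt_PCt_Nil pplugt_papp_ctx append_es_neq_Nil\<close>)
qed

fun env_binders :: "env \<Rightarrow> var list" where
  "env_binders [] = []"
| "env_binders ((x, s) # E) = x # bvars s @ env_binders E"

lemma env_binders_append [simp]: "env_binders (E @ E') = env_binders E @ env_binders E'"
  by (induction E rule: env_binders.induct) auto

lemma pbinders_pair: "pbinders (t, E) = bvars t @ env_binders E"
proof -
  have "concat (map (\<lambda>(x, s). x # bvars s) E) = env_binders E"
    by (induction E rule: env_binders.induct) auto
  then show ?thesis by (simp add: pbinders_def)
qed

lemma dom_subset_env_binders: "fst ` set E \<subseteq> set (env_binders E)"
  by (induction E rule: env_binders.induct) auto

lemma fvp_append_es: "fvp (append_es p x s) = (fvp p - {x}) \<union> fv s"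
  by (cases p) (simp add: fvp_def)

lemma pbinders_append_es: "pbinders (append_es p x s) = pbinders p @ x # bvars s"
  by (cases p) (simp add: pbinders_pair)

lemma well_named_append_es:
  "well_named (append_es p x s) \<Longrightarrow> well_named p \<and> fv s \<inter> insert x (fst ` set (snd p)) = {}"
  using dom_subset_env_binders[of "snd p"]
  unfolding well_named_def pbinders_append_es fvp_append_es by (cases p) (auto simp: pbinders_pair)

lemma evctx_alt_needed_unbound: "evctx_alt P V \<Longrightarrow> well_named (pplugt P r) \<Longrightarrow> V \<inter> pdom P = {}"
proof (induction arbitrary: r rule: evctx_alt.induct)
  case (append P V x s)
  have "well_named (append_es (pplugt P r) x s)"
    using append.prems by (simp add: pplugt_papp)
  then have "V \<inter> pdom P = {}" "fv s \<inter> insert x (pdom P) = {}"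
    using append.IH[of r] well_named_append_es[of "pplugt P r" x s] pdom_eq_pplugt[of P r] by auto
  with append.hyps(3) nv_subset_fv[of s] show ?case
    unfolding nv_append_def pdom_papp by auto
next
  case (hered P V x H)
  have "well_named (append_es (pplugt P (Var x)) x (plugc H r))"
    using hered.prems by (simp add: pplugt_papp_ctx)
  then have "V \<inter> pdom P = {}" "fv (plugc H r) \<inter> insert x (pdom P) = {}"
    using hered.IH[of "Var x"] well_named_append_es[of "pplugt P (Var x)" x "plugc H r"]
      pdom_eq_pplugt[of P "Var x"] by auto
  with hered.hyps(2) nvC_subset_fv[of H r] show ?case
    unfolding pdom_papp_ctx pdom_eq_pplugt[of P "Var x", symmetric] by auto
qed simp

definition ond_redex :: "pctx \<Rightarrow> trm \<Rightarrow> bool" where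
  "ond_redex P r \<longleftrightarrow>
    (\<exists>x t u. r = App (Lam x t) u) \<or> (\<exists>y v. r = Var y \<and> plookup P y = Some v \<and> is_value v)"

lemma ond_redex_not_stuck_var: "ond_redex P r \<Longrightarrow> V \<inter> pdom P = {} \<Longrightarrow> \<not> stuck_var P V r"
  unfolding ond_redex_def stuck_var_def by (auto dest: plookup_in_pdom)

lemma ond_redex_redex_or_var: "ond_redex P r \<Longrightarrow> redex_or_var r"
  unfolding ond_redex_def redex_or_var_def by blast

lemma ond_decomp_unique:
  assumes "evctx P V" "evctx P' V'" "well_named (pplugt P r)" "pplugt P r = pplugt P' r'"
    and "ond_redex P r" "ond_redex P' r'"
  shows "P = P' \<and> r = r'"
proof -
  have ctx: "evctx_alt P V" "evctx_alt P' V'"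
    using assms(1,2) by (auto intro: evctx_imp_evctx_alt)
  have "pdom P = pdom P'"
    using assms(4) pdom_eq_pplugt[of P r] pdom_eq_pplugt[of P' r'] by simp
  moreover have "V \<inter> pdom P = {}" "V' \<inter> pdom P' = {}"
    using assms(3,4) evctx_alt_needed_unbound ctx by metis+
  ultimately have "\<not> stuck_var P V' r" "\<not> stuck_var P' V r'"
    using assms(5,6) ond_redex_not_stuck_var by auto
  with evctx_alt_decomp_unique[OF ctx assms(4)] assms(5,6) show ?thesis
    by (auto intro: ond_redex_redex_or_var)
qed

lemma ond_raw_well_named: "ond_raw p q \<Longrightarrow> well_named p"
  by (induction rule: ond_raw.induct) auto

definition ond_reduct_at :: "pctx \<Rightarrow> trm \<Rightarrow> prog \<Rightarrow> bool" where
  "ond_reduct_at P r q \<longleftrightarrow>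
    (\<exists>x t u. r = App (Lam x t) u \<and> q = pplug P (t, [(x, u)]))
    \<or> (\<exists>y v v'. r = Var y \<and> plookup P y = Some v \<and> alpha_trm v v' \<and> q = pplugt P v')"

lemma ond_raw_at_redex:
  assumes "ond_raw p q"
  obtains P V r where "evctx P V" "well_named (pplugt P r)" "p = pplugt P r" "ond_redex P r"
    "ond_reduct_at P r q"
  using assms
proof cases
  case (om P V x t u)
  then show ?thesis
    using that[of P V "App (Lam x t) u"] unfolding ond_redex_def ond_reduct_at_def by blast
next
  case (oe P V y v v')
  then show ?thesis
    using that[of P V "Var y"] unfolding ond_redex_def ond_reduct_at_def by blast
qed

lemma ond_reduct_at_alpha_unique:
  assumes "ond_reduct_at P r q" "ond_reduct_at P r q'"
  shows "alpha_prog q q'"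
proof (cases "\<exists>y. r = Var y")
  case True
  with assms obtain v v1 v2 where "alpha_trm v v1" "alpha_trm v v2" "q = pplugt P v1" "q' = pplugt P v2"
    unfolding ond_reduct_at_def by auto
  then show ?thesis
    using alpha_trm_sym alpha_trm_trans alpha_prog_pplugt by metis
next
  case False
  with assms show ?thesis
    unfolding ond_reduct_at_def by (auto simp: alpha_prog_refl)
qed

lemma ond_raw_deterministic_alpha:
  assumes "ond_raw p q" "ond_raw p q'"
  shows "alpha_prog q q'"
proof -
  obtain P V r where step: "evctx P V" "well_named (pplugt P r)" "p = pplugt P r" "ond_redex P r"
    "ond_reduct_at P r q"
    using assms(1) by (rule ond_raw_at_redex)
  obtain P' V' r' where step': "evctx P' V'" "p = pplugt P' r'" "ond_redex P' r'"
    "ond_reduct_at P' r' q'"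
    using assms(2) by (rule ond_raw_at_redex)
  have "P = P' \<and> r = r'"
    using ond_decomp_unique step(1,2,4) step'(1,3) step(3) step'(2) by metis
  with step(5) step'(4) show ?thesis
    by (simp add: ond_reduct_at_alpha_unique)
qed

section \<open>Renaming\<close>

fun renT :: "(var \<Rightarrow> var) \<Rightarrow> trm \<Rightarrow> trm" where
  "renT f (Var x) = Var (f x)"
| "renT f (Lam x t) = Lam (f x) (renT f t)"
| "renT f (App t u) = App (renT f t) (renT f u)"

abbreviation renE :: "(var \<Rightarrow> var) \<Rightarrow> env \<Rightarrow> env" where
  "renE f \<equiv> map (map_prod f (renT f))"

fun renP :: "(var \<Rightarrow> var) \<Rightarrow> prog \<Rightarrow> prog" where
  "renP f (t, E) = (renT f t, renE f E)"

fun renC :: "(var \<Rightarrow> var) \<Rightarrow> ctx \<Rightarrow> ctx" where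
  "renC f Hole = Hole"
| "renC f (CAppL C t) = CAppL (renC f C) (renT f t)"
| "renC f (CAppR t C) = CAppR (renT f t) (renC f C)"

fun renPC :: "(var \<Rightarrow> var) \<Rightarrow> pctx \<Rightarrow> pctx" where
  "renPC f (PCt C E) = PCt (renC f C) (renE f E)"
| "renPC f (PCe u E1 y C E2) = PCe (renT f u) (renE f E1) (f y) (renC f C) (renE f E2)"

lemma renT_plugc: "renT f (plugc C t) = plugc (renC f C) (renT f t)"
  by (induction C) auto

lemma renP_pplug: "renP f (pplug P p) = pplug (renPC f P) (renP f p)"
  by (cases P; cases p) (auto simp: renT_plugc)

lemma renP_pplugt: "renP f (pplugt P t) = pplugt (renPC f P) (renT f t)"
  unfolding pplugt_def by (simp add: renP_pplug)

lemma renPC_papp: "renPC f (papp P x s) = papp (renPC f P) (f x) (renT f s)"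
  by (cases P) auto

lemma renPC_papp_ctx: "renPC f (papp_ctx p x H) = papp_ctx (renP f p) (f x) (renC f H)"
  by (cases p) auto

lemma is_value_renT [simp]: "is_value (renT f t) = is_value t"
  by (cases t) auto

lemma inert_renT [simp]: "inert (renT f t) = inert t"
  by (induction t rule: inert.induct) auto

lemma is_H_renC [simp]: "is_H (renC f C) = is_H C"
  by (induction C) auto

lemma nv_renT: "nv (renT f t) = f ` nv t"
  by (induction t) auto

lemma nvC_renC: "nvC (renC f C) = f ` nvC C"
  by (induction C) (auto simp: nv_renT)

lemma pdom_renPC: "pdom (renPC f P) = f ` pdom P"
  by (cases P) (auto simp: image_image image_Un)

lemma map_of_renE: "inj f \<Longrightarrow> map_of (renE f E) (f x) = map_option (renT f) (map_of E x)"
  by (induction E) (auto simp: inj_eq)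

lemma plookup_renPC: "inj f \<Longrightarrow> plookup (renPC f P) (f x) = map_option (renT f) (plookup P x)"
  by (cases P) (auto simp: map_of_renE simp flip: map_append)

lemma fv_renT: "inj f \<Longrightarrow> fv (renT f t) = f ` fv t"
  by (induction t) (auto simp: image_set_diff)

lemma bvars_renT: "bvars (renT f t) = map f (bvars t)"
  by (induction t) auto

lemma names_renT: "names (renT f t) = f ` names t"
  by (induction t) auto

lemma fvR_renT: "inj f \<Longrightarrow> fvR (renT f t) (renE f R) = f ` fvR t R"
  by (induction t R rule: fvR.induct) (auto simp: fv_renT image_set_diff image_Un)

lemma fvp_renP: "inj f \<Longrightarrow> fvp (renP f p) = f ` fvp p"
  by (cases p) (simp add: fvp_def fvR_renT rev_map)

lemma pbinders_renP: "pbinders (renP f p) = map f (pbinders p)"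
  by (cases p) (simp add: pbinders_def bvars_renT map_concat case_prod_beta comp_def)

lemma pnames_renP: "pnames (renP f p) = f ` pnames p"
  by (cases p) (simp add: pnames_def names_renT image_UN case_prod_beta image_Un)

lemma well_named_renP: "inj f \<Longrightarrow> well_named (renP f p) = well_named p"
  unfolding well_named_def
  by (simp add: pbinders_renP fvp_renP distinct_map inj_on_subset[of f UNIV] image_Int[symmetric])

lemma alv_rename: "inj f \<Longrightarrow> alv G x y \<Longrightarrow> alv (map (map_prod f f) G) (f x) (f y)"
  by (induction G) (auto simp: inj_eq)

lemma alphaT_rename:
  "inj f \<Longrightarrow> alphaT G t u \<Longrightarrow> alphaT (map (map_prod f f) G) (renT f t) (renT f u)"
  by (induction G t u rule: alphaT.induct) (auto simp: alv_rename)

lemma alpha_trm_renT: "inj f \<Longrightarrow> alpha_trm t u \<Longrightarrow> alpha_trm (renT f t) (renT f u)"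
  unfolding alpha_trm_def using alphaT_rename[of f "[]"] by simp

lemma evctx_renPC: assumes "inj f" shows "evctx P V \<Longrightarrow> evctx (renPC f P) (f ` V)"
proof (induction rule: evctx.induct)
  case (ev_base H)
  then show ?case using evctx.ev_base[of "renC f H"] by (simp add: nvC_renC)
next
  case (ev_inert P V x i)
  have "evctx (papp (renPC f P) (f x) (renT f i)) ((f ` V - {f x}) \<union> nv (renT f i))"
    using ev_inert assms by (intro evctx.ev_inert) (auto simp: pdom_renPC inj_image_mem_iff)
  then show ?case using assms by (simp add: renPC_papp nv_renT image_set_diff image_Un)
next
  case (ev_skip P V x t)
  have "evctx (papp (renPC f P) (f x) (renT f t)) (f ` V)"
    using ev_skip assms by (intro evctx.ev_skip) (auto simp: pdom_renPC inj_image_mem_iff)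
  then show ?case by (simp add: renPC_papp)
next
  case (ev_hered P V x H)
  have "evctx (papp_ctx (pplugt (renPC f P) (Var (f x))) (f x) (renC f H)) (f ` V \<union> nvC (renC f H))"
    using ev_hered assms by (intro evctx.ev_hered) (auto simp: pdom_renPC inj_image_mem_iff nvC_renC)
  then show ?case by (simp add: renPC_papp_ctx renP_pplugt nvC_renC image_Un)
qed

lemma ond_raw_renP: assumes "inj f" shows "ond_raw p q \<Longrightarrow> ond_raw (renP f p) (renP f q)"
proof (induction rule: ond_raw.induct)
  case (om P V x t u)
  have "ond_raw (pplugt (renPC f P) (App (Lam (f x) (renT f t)) (renT f u)))
                (pplug (renPC f P) (renT f t, [(f x, renT f u)]))"
    using om evctx_renPC[OF assms om(1)] well_named_renP[OF assms, of "pplugt P (App (Lam x t) u)"]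
    by (intro ond_raw.om) (auto simp: renP_pplugt)
  then show ?case by (simp add: renP_pplugt renP_pplug)
next
  case (oe P V x v v')
  have "set (bvars (renT f v')) \<inter> pnames (pplugt (renPC f P) (Var (f x)))
      = f ` (set (bvars v') \<inter> pnames (pplugt P (Var x)))"
    using pnames_renP[of f "pplugt P (Var x)"] assms
    by (simp add: bvars_renT renP_pplugt image_Int)
  then have "ond_raw (pplugt (renPC f P) (Var (f x))) (pplugt (renPC f P) (renT f v'))"
    using oe evctx_renPC[OF assms oe(1)] well_named_renP[OF assms, of "pplugt P (Var x)"]
      plookup_renPC[OF assms] alpha_trm_renT[OF assms]
    by (intro ond_raw.oe[of _ _ _ "renT f v"]) (auto simp: renP_pplugt)
  then show ?case by (simp add: renP_pplugt)
qed

lemma alphaT_renT_fixing_fv: "inj f \<Longrightarrow> \<forall>z\<in>fv t. alv G z (f z) \<Longrightarrow> alphaT G t (renT f t)"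
proof (induction t arbitrary: G)
  case (Lam x t)
  then have "\<forall>z\<in>fv t. alv ((x, f x) # G) z (f z)"
    by (auto simp: inj_eq)
  with Lam.IH[OF Lam.prems(1)] show ?case by simp
qed auto

lemma alphaR_ren_fixing_fv:
  "inj f \<Longrightarrow> \<forall>z\<in>fvR t R. alv G z (f z) \<Longrightarrow> alphaR G t (renT f t) R (renE f R)"
proof (induction R arbitrary: G)
  case Nil
  then show ?case by (simp add: alphaT_renT_fixing_fv)
next
  case (Cons p R)
  obtain x s where p: "p = (x, s)" by force
  with Cons.prems have "\<forall>z\<in>fvR t R. alv ((x, f x) # G) z (f z)" "\<forall>z\<in>fv s. alv G z (f z)"
    by (auto simp: inj_eq)
  with Cons.IH[OF Cons.prems(1)] alphaT_renT_fixing_fv[OF Cons.prems(1)] p show ?case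
    by simp
qed

lemma alpha_prog_renP_fixing_fv: "inj f \<Longrightarrow> \<forall>z\<in>fvp q. f z = z \<Longrightarrow> alpha_prog q (renP f q)"
  using alphaR_ren_fixing_fv[of f "fst q" "rev (snd q)" "[]"]
  by (cases q) (auto simp: alpha_prog_def fvp_def rev_map)

section \<open>Steps do not create free variables\<close>

fun fv_env :: "env \<Rightarrow> var set \<Rightarrow> var set" where
  "fv_env [] S = S"
| "fv_env ((x, s) # R) S = (fv_env R S - {x}) \<union> fv s"

lemma fvp_pair: "fvp (t, E) = fv_env (rev E) (fv t)"
proof -
  have "fvR t R = fv_env R (fv t)" for R
    by (induction t R rule: fvR.induct) auto
  then show ?thesis by (simp add: fvp_def)
qed

lemma fv_env_append: "fv_env (R @ R') S = fv_env R (fv_env R' S)"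
  by (induction R arbitrary: S) auto

lemma fv_env_Un: "fv_env R (A \<union> B) = fv_env R A \<union> fv_env R B"
  by (induction R) auto

lemma fv_env_mono: "A \<subseteq> B \<Longrightarrow> fv_env R A \<subseteq> fv_env R B"
  by (induction R) auto

lemma fv_env_unbound: "z \<in> S \<Longrightarrow> z \<notin> fst ` set R \<Longrightarrow> z \<in> fv_env R S"
  by (induction R S rule: fv_env.induct) auto

lemma fv_env_lookup: "map_of E y = Some v \<Longrightarrow> fv_env (rev E) (fv v) \<subseteq> fv_env (rev E) {y}"
proof (induction E)
  case (Cons p E)
  obtain a s where p: "p = (a, s)" by force
  show ?case
  proof (cases "a = y")
    case True
    with Cons.prems p show ?thesis by (simp add: fv_env_append fv_env_mono)
  next
    case False
    with Cons.prems p have "fv_env (rev E) (fv v) \<subseteq> fv_env (rev E) {y}"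
      using Cons.IH by simp
    then have "fv_env (rev E) ((fv v - {a}) \<union> fv s) \<subseteq> fv_env (rev E) {y} \<union> fv_env (rev E) (fv s)"
      using fv_env_mono[of "fv v - {a}" "fv v" "rev E"] by (auto simp: fv_env_Un)
    also have "\<dots> = fv_env (rev E) (({y} - {a}) \<union> fv s)"
      using False fv_env_Un[of "rev E" "{y}" "fv s"] by simp
    finally show ?thesis
      using p by (simp add: fv_env_append)
  qed
qed simp

lemma fv_plugc_diff: "fv t - X \<subseteq> fv u \<Longrightarrow> fv (plugc C t) - X \<subseteq> fv (plugc C u)"
  by (induction C) auto

lemma fv_plugc_subset: "fv (plugc C t) \<subseteq> fv (plugc C u) \<union> fv t"
  by (induction C) auto

lemma fv_subset_plugc: "fv t \<subseteq> fv (plugc C t)"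
  by (induction C) auto

lemma alv_unbound: "alv G x y \<Longrightarrow> x \<notin> fst ` set G \<Longrightarrow> x = y \<and> y \<notin> snd ` set G"
  by (induction G) force+

lemma alphaT_fv:
  "alphaT G t u \<Longrightarrow> z \<in> fv t \<Longrightarrow> z \<notin> fst ` set G \<Longrightarrow> z \<in> fv u \<and> z \<notin> snd ` set G"
proof (induction G t u rule: alphaT.induct)
  case (1 G x y)
  then show ?case using alv_unbound[of G x y] by auto
next
  case (2 G x t y u)
  then show ?case by auto
qed auto

lemma alpha_trm_fv: "alpha_trm t u \<Longrightarrow> fv u = fv t"
  using alphaT_fv[of "[]" t u] alphaT_fv[of "[]" u t] alpha_trm_sym[of t u]
  unfolding alpha_trm_def by auto

lemma fvp_om_subset: "fvp (pplug P (t, [(x, u)])) \<subseteq> fvp (pplugt P (App (Lam x t) u))"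
proof -
  have fv_contract: "(S \<union> fv (plugc C t) - {x}) \<union> fv u \<subseteq> S \<union> fv (plugc C (App (Lam x t) u))" for S C
    using fv_plugc_diff[of t "{x}" "App (Lam x t) u" C] fv_subset_plugc[of "App (Lam x t) u" C]
    by auto
  show ?thesis
  proof (cases P)
    case (PCt C E)
    then show ?thesis
      using fv_env_mono[OF fv_contract[of "{}" C]]
      by (simp add: pplugt_def fvp_pair fv_env_append)
  next
    case (PCe u0 E1 y C E2)
    then show ?thesis
      using fv_env_mono[OF fv_contract[of "fv_env (rev E1) (fv u0) - {y}" C]]
      by (simp add: pplugt_def fvp_pair fv_env_append)
  qed
qed

lemma fv_env_plugc_lookup:
  assumes "map_of E y = Some v" "fv v' = fv v"
  shows "fv_env (rev E) (S \<union> fv (plugc C v')) \<subseteq> fv_env (rev E) (S \<union> fv (plugc C (Var y)))"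
proof -
  have "fv_env (rev E) (S \<union> fv (plugc C v')) \<subseteq> fv_env (rev E) (S \<union> fv (plugc C (Var y)) \<union> fv v)"
    by (rule fv_env_mono) (use fv_plugc_subset[of C v' "Var y"] assms(2) in auto)
  also have "\<dots> \<subseteq> fv_env (rev E) (S \<union> fv (plugc C (Var y)) \<union> {y})"
    using fv_env_lookup[OF assms(1)] by (auto simp: fv_env_Un simp del: Un_insert_right)
  also have "S \<union> fv (plugc C (Var y)) \<union> {y} = S \<union> fv (plugc C (Var y))"
    using fv_subset_plugc[of "Var y" C] by auto
  finally show ?thesis .
qed

text \<open>\<open>plookup\<close> on \<open>PCe u E1 x C E2\<close> also searches \<open>E1\<close>, whose ES do not scope over the hole;
  well-namedness excludes that a variable in the hole is found there.\<close>

lemma well_named_hole_var_not_inner: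
  assumes "well_named (pplugt (PCe u E1 x C E2) (Var y))"
  shows "y \<notin> fst ` set E1"
proof
  let ?p = "pplugt (PCe u E1 x C E2) (Var y)"
  assume "y \<in> fst ` set E1"
  then have "y \<in> set (env_binders E1)"
    using dom_subset_env_binders by blast
  moreover have "pbinders ?p = bvars u @ env_binders E1 @ (x # bvars (plugc C (Var y))) @ env_binders E2"
    by (simp add: pplugt_def pbinders_pair)
  ultimately have "y \<in> set (pbinders ?p)" "y \<notin> set (env_binders E2)"
    using assms unfolding well_named_def by auto
  then have "y \<notin> fst ` set E2"
    using dom_subset_env_binders by blast
  then have "y \<in> fv_env (rev E2) (fv_env (rev E1) (fv u) - {x} \<union> fv (plugc C (Var y)))"
    using fv_subset_plugc[of "Var y" C] by (intro fv_env_unbound) auto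
  then have "y \<in> fvp ?p"
    by (simp add: pplugt_def fvp_pair fv_env_append)
  with \<open>y \<in> set (pbinders ?p)\<close> show False
    using assms unfolding well_named_def by blast
qed

lemma fvp_oe_subset:
  assumes "well_named (pplugt P (Var y))" "plookup P y = Some v" "alpha_trm v v'"
  shows "fvp (pplugt P v') \<subseteq> fvp (pplugt P (Var y))"
proof (cases P)
  case (PCt C E)
  with assms show ?thesis
    using fv_env_plugc_lookup[of E y v v' "{}" C] alpha_trm_fv
    by (simp add: pplugt_def fvp_pair)
next
  case (PCe u E1 x C E2)
  with assms have "map_of E2 y = Some v"
    using well_named_hole_var_not_inner
    by (auto simp: map_add_def map_of_eq_None_iff[THEN iffD2] split: option.splits)
  with PCe show ?thesis
    using fv_env_plugc_lookup[of E2 y v v' "fv_env (rev E1) (fv u) - {x}" C] alpha_trm_fv[OF assms(3)]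
    by (simp add: pplugt_def fvp_pair fv_env_append)
qed

lemma fvp_ond_raw_subset: "ond_raw p q \<Longrightarrow> fvp q \<subseteq> fvp p"
  by (induction rule: ond_raw.induct) (use fvp_om_subset fvp_oe_subset in blast)+

section \<open>Alpha-equivalent well-named programs are renamings of each other\<close>

lemma ex_bij_map_eq_fixing:
  assumes "length A = length B" "distinct A" "distinct B" "set A \<inter> F = {}" "set B \<inter> F = {}"
  shows "\<exists>f. bij f \<and> map f A = B \<and> (\<forall>z\<in>F. f z = z)"
  using assms
proof (induction A B rule: list_induct2)
  case Nil
  have "bij (\<lambda>z :: var. z)"
    by (simp add: bij_betw_def)
  then show ?case by auto
next
  case (Cons a A b B)
  then obtain g where g: "bij g" "map g A = B" "\<forall>z\<in>F. g z = z"
    by auto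
  define f where "f = Transposition.transpose b (g a) \<circ> g"
  have g_neq: "g x \<noteq> g a" if "x \<noteq> a" for x
    using g(1) that by (simp add: bij_def inj_eq)
  have "f x = g x" if "x \<in> set A" for x
  proof -
    have "g x \<in> set B" using g(2) that by auto
    then have "g x \<noteq> b" using Cons.prems(2) by auto
    moreover have "x \<noteq> a" using that Cons.prems(1) by auto
    then have "g x \<noteq> g a" by (rule g_neq)
    ultimately show ?thesis by (simp add: f_def)
  qed
  then have "map f A = B"
    using g(2) map_eq_conv[of f A g] by simp
  moreover have "f a = b"
    by (simp add: f_def)
  moreover have "f z = z" if "z \<in> F" for z
  proof -
    have "z \<noteq> b" "z \<noteq> a" using Cons.prems that by auto
    with g(3) g_neq[of z] that show ?thesis by (simp add: f_def)
  qed
  moreover have "bij f"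
    using g(1) by (simp add: f_def bij_comp)
  ultimately show ?case by auto
qed

lemma alphaR_length_binders:
  "alphaR G t u R R' \<Longrightarrow> length (bvars t @ env_binders (rev R)) = length (bvars u @ env_binders (rev R'))"
proof -
  have "alphaT G t u \<Longrightarrow> length (bvars t) = length (bvars u)" for G t u
    by (induction G t u rule: alphaT.induct) auto
  then show "alphaR G t u R R' \<Longrightarrow> ?thesis"
    by (induction G t u R R' rule: alphaR.induct) auto
qed

lemma alphaR_fv:
  "alphaR G t u R R' \<Longrightarrow> z \<in> fvR t R \<Longrightarrow> z \<notin> fst ` set G \<Longrightarrow> z \<in> fvR u R' \<and> z \<notin> snd ` set G"
proof (induction G t u R R' rule: alphaR.induct)
  case (1 G t u)
  then show ?case using alphaT_fv by simp
next
  case (2 G t u x s R y s' R')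
  then show ?case
    using alphaT_fv[of G s s' z] by (cases "z \<in> fv s") auto
qed auto

lemma alv_eq_fun:
  "alv G x y \<Longrightarrow> \<forall>(a, b)\<in>set G. f a = b \<Longrightarrow> (x \<notin> fst ` set G \<longrightarrow> f x = x) \<Longrightarrow> f x = y"
proof (induction G)
  case (Cons p G)
  then show ?case by (cases p) auto
qed simp

lemma renT_eq_if_alphaT:
  "alphaT G t u \<Longrightarrow> \<forall>(a, b)\<in>set G. f a = b \<Longrightarrow> \<forall>z\<in>fv t. z \<notin> fst ` set G \<longrightarrow> f z = z
    \<Longrightarrow> map f (bvars t) = bvars u \<Longrightarrow> renT f t = u"
proof (induction G t u rule: alphaT.induct)
  case (1 G x y)
  then show ?case using alv_eq_fun[of G x y f] by simp
next
  case (2 G x t y u)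
  then show ?case by auto
next
  case (3 G t1 t2 u1 u2)
  then have "length (map f (bvars t1)) = length (bvars u1)"
    using alphaR_length_binders[of G t1 u1 "[]" "[]"] by simp
  with "3" show ?case by auto
qed simp_all

lemma ren_eq_if_alphaR:
  "alphaR G t u R R' \<Longrightarrow> \<forall>(a, b)\<in>set G. f a = b \<Longrightarrow> \<forall>z\<in>fvR t R. z \<notin> fst ` set G \<longrightarrow> f z = z
    \<Longrightarrow> map f (bvars t @ env_binders (rev R)) = bvars u @ env_binders (rev R')
    \<Longrightarrow> renT f t = u \<and> renE f R = R'"
proof (induction G t u R R' rule: alphaR.induct)
  case (1 G t u)
  then show ?case using renT_eq_if_alphaT by simp
next
  case (2 G t u x s R y s' R')
  then have len: "length (map f (bvars t @ env_binders (rev R))) = length (bvars u @ env_binders (rev R'))"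
    using alphaR_length_binders[of "(x, y) # G" t u R R'] by simp
  have "map f (bvars t @ env_binders (rev R)) @ f x # map f (bvars s)
      = (bvars u @ env_binders (rev R')) @ y # bvars s'"
    using "2.prems"(4) by simp
  then have "map f (bvars t @ env_binders (rev R)) = bvars u @ env_binders (rev R')"
    "f x = y" "map f (bvars s) = bvars s'"
    unfolding append_eq_append_conv[OF disjI1[OF len]] by simp_all
  with "2" renT_eq_if_alphaT[of G s s' f] show ?case by auto
qed simp_all

lemma well_named_alpha_prog_renaming:
  assumes "well_named p" "well_named p'" "alpha_prog p p'"
  shows "\<exists>f. bij f \<and> renP f p = p' \<and> (\<forall>z\<in>fvp p. f z = z)"
proof -
  obtain t E t' E' where p: "p = (t, E)" "p' = (t', E')"
    by (cases p; cases p')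
  with assms(3) have alpha: "alphaR [] t t' (rev E) (rev E')"
    by (simp add: alpha_prog_def)
  then have "length (pbinders p) = length (pbinders p')"
    using alphaR_length_binders[OF alpha] p by (simp add: pbinders_pair)
  moreover have "fvp p \<subseteq> fvp p'"
    using alphaR_fv[OF alpha] p by (auto simp: fvp_def)
  ultimately obtain f where f: "bij f" "map f (pbinders p) = pbinders p'" "\<forall>z\<in>fvp p. f z = z"
    using ex_bij_map_eq_fixing[of "pbinders p" "pbinders p'" "fvp p"] assms(1,2)
    unfolding well_named_def by blast
  then have "renT f t = t' \<and> renE f (rev E) = rev E'"
    using ren_eq_if_alphaR[OF alpha] p by (simp add: pbinders_pair fvp_def)
  with f p show ?thesis
    by (auto simp: rev_map [symmetric])
qed

theorem mainTheorem2:
  assumes "ond p q" and "ond p q'"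
  shows "alpha_prog q q'"
proof -
  obtain p0 q0 where p0: "alpha_prog p p0" "ond_raw p0 q0" "alpha_prog q0 q"
    using assms(1) unfolding ond_def by blast
  obtain p1 q1 where p1: "alpha_prog p p1" "ond_raw p1 q1" "alpha_prog q1 q'"
    using assms(2) unfolding ond_def by blast
  have "alpha_prog p0 p1"
    using p0(1) p1(1) alpha_prog_sym alpha_prog_trans by blast
  then obtain f where f: "bij f" "renP f p0 = p1" "\<forall>z\<in>fvp p0. f z = z"
    using well_named_alpha_prog_renaming ond_raw_well_named p0(2) p1(2) by blast
  have "ond_raw p1 (renP f q0)"
    using ond_raw_renP[OF bij_is_inj[OF f(1)] p0(2)] f(2) by simp
  from this p1(2) have "alpha_prog (renP f q0) q1"
    by (rule ond_raw_deterministic_alpha)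
  moreover have "alpha_prog q0 (renP f q0)"
    using alpha_prog_renP_fixing_fv[OF bij_is_inj[OF f(1)]] f(3) fvp_ond_raw_subset[OF p0(2)] by blast
  ultimately show ?thesis
    using p0(3) p1(3) alpha_prog_sym alpha_prog_trans by meson
qed

end
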